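(* Let $n\ge2$ and let $k$ be a positive integer with $k\le n-1$. For $\delta_1,\dots,\delta_{n-2}\in\{\mathsf A,\mathsf D\}$, consider $\delta=(\delta_1,\dots,\delta_{n-2},\mathsf A,\mathsf D)$ and $\delta'=(\delta_1,\dots,\delta_{n-2},\mathsf D,\mathsf A)$ in $\{\mathsf A,\mathsf D\}^n$. Then $$\mathbf{i}_\delta(\underbrace{0,\dots,0}_{n-1},k)\sim\mathbf{i}_{\delta'}(\underbrace{0,\dots,0}_{n-1},n-k-1).$$
   Context: $\mathfrak{S}_{m+1}$ is generated by $s_i=(i,i+1)$; $R(w_0^{(m+1)})$ is the set of reduced words $(i_1,\dots,i_{\bar m})\in[m]^{\bar m}$, $\bar m=m(m+1)/2$, of its longest element, with $R(w_0^{(1)})=\{\emptyset\}$. A 2-move exchanges two consecutive letters $i,j$ with $|i-j|>1$; $\mathbf{i}\sim\mathbf{i}'$ means the words are related by a sequence of 2-moves. For a word $\mathbf j$, $\mathbf j+1$ adds 1 to each letter. Extensions: for $\mathbf{i}=(i_1,\dots,i_{\bar m})\in R(w_0^{(m+1)})$ and $s\in\{0,\dots,\bar m\}$, with $\mathbf{i}^-(s)=(i_1,\dots,i_{\bar m-s})$ and $\mathbf{i}^+(s)=(i_{\bar m-s+1},\dots,i_{\bar m})$, set $E_{\mathsf D}(s)(\mathbf{i})=(\mathbf{i}^-(s),m+1,m,\dots,1,\mathbf{i}^+(s)+1)$ and $E_{\mathsf A}(s)(\mathbf{i})=(\mathbf{i}^-(s)+1,1,2,\dots,m+1,\mathbf{i}^+(s))$,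 elements of $R(w_0^{(m+2)})$. For $\delta\in\{\mathsf A,\mathsf D\}^n$ and $I=(I_1,\dots,I_n)$ with $0\le I_j\le j(j-1)/2$, define $\mathbf{i}_\delta(I)=(E_{\delta_n}(I_n)\circ\cdots\circ E_{\delta_2}(I_2)\circ E_{\delta_1}(I_1))(\emptyset)\in R(w_0^{(n+1)})$. *)

theory Defs
  imports Main
begin

text \<open>Words are lists of positive naturals (letters in [m]).
  The type of extension labels A / D.\<close>
datatype ext_type = ExtA | ExtD

text \<open>E_D(s) and E_A(s) applied to a word i in R(w_0^{(m+1)}) (of length m(m+1)/2);
  i^-(s) is the first (length - s) letters, i^+(s) the last s letters.\<close>
definition ext_D :: "nat \<Rightarrow> nat \<Rightarrow> nat list \<Rightarrow> nat list" where
  "ext_D m s w = take (length w - s) w @ rev [1..<m+2] @ map Suc (drop (length w - s) w)"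

definition ext_A :: "nat \<Rightarrow> nat \<Rightarrow> nat list \<Rightarrow> nat list" where
  "ext_A m s w = map Suc (take (length w - s) w) @ [1..<m+2] @ drop (length w - s) w"

definition ext :: "ext_type \<Rightarrow> nat \<Rightarrow> nat \<Rightarrow> nat list \<Rightarrow> nat list" where
  "ext d m s w = (case d of ExtA \<Rightarrow> ext_A m s w | ExtD \<Rightarrow> ext_D m s w)"

text \<open>iw_aux j ds Is w applies E_{d_j}(I_j), E_{d_{j+1}}(I_{j+1}), ...; at step j the
  current word lies in R(w_0^{(j)}), so the extension uses m = j - 1.\<close>
fun iw_aux :: "nat \<Rightarrow> ext_type list \<Rightarrow> nat list \<Rightarrow> nat list \<Rightarrow> nat list" where
  "iw_aux j (d # ds) (s # ss) w = iw_aux (Suc j) ds ss (ext d (j - 1) s w)"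
| "iw_aux j _ _ w = w"

definition i_word :: "ext_type list \<Rightarrow> nat list \<Rightarrow> nat list" where
  "i_word ds Is = iw_aux 1 ds Is []"

definition two_move :: "nat list \<Rightarrow> nat list \<Rightarrow> bool" where
  "two_move u v \<longleftrightarrow> (\<exists>xs ys a b. (a > b + 1 \<or> b > a + 1) \<and>
      u = xs @ [a, b] @ ys \<and> v = xs @ [b, a] @ ys)"

definition two_move_equiv :: "nat list \<Rightarrow> nat list \<Rightarrow> bool" where
  "two_move_equiv u v \<longleftrightarrow> two_move\<^sup>*\<^sup>* u v"

end

theory Submission
  imports Defs
begin

text \<open>Let \<open>p = n - 1 - k\<close>, let \<open>W\<close> be the word built by the common first \<open>n - 2\<close>
  extensions, and put \<open>X = (1,\<dots>,p)\<close>, \<open>Y = (p+2,\<dots>,n)\<close>. Unfolding the last two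
  extensions gives
  \<open>\<^bold>i\<^sub>\<delta> = (W+1) X (rev Y) (p+1) (rev X) Y\<close> and \<open>\<^bold>i\<^sub>\<delta>\<^sub>' = (W+1) (rev Y) X (p+1) Y (rev X)\<close>.
  Letters of \<open>X\<close> and \<open>Y\<close> differ by at least 2, so adjacent blocks drawn from \<open>X\<close> and
  \<open>Y\<close> commute by 2-moves.\<close>

lemma upt_append_split: "i \<le> j \<Longrightarrow> j \<le> l \<Longrightarrow> [i..<l] = [i..<j] @ [j..<l]"
  by (metis le_add_diff_inverse upt_add_eq_append)

lemma upt_split_at_elem: "i \<le> j \<Longrightarrow> j < l \<Longrightarrow> [i..<l] = [i..<j] @ [j] @ [Suc j..<l]"
  by (metis upt_append_split upt_conv_Cons append_Cons append_Nil less_imp_le)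

lemma replicate_Suc_snoc: "replicate (Suc m) x @ [y] = replicate m x @ [x, y]"
  by (simp add: replicate_app_Cons_same)

lemma two_move_swap:
  assumes "a > b + 1 \<or> b > a + 1"
  shows "two_move (x @ [a, b] @ y) (x @ [b, a] @ y)"
  unfolding two_move_def using assms by (intro exI[of _ x] exI[of _ y] exI[of _ a] exI[of _ b]) simp

lemma two_move_append_context:
  "two_move u v \<Longrightarrow> two_move (x @ u @ y) (x @ v @ y)"
  unfolding two_move_def by (metis append.assoc)

lemma two_move_equiv_refl: "two_move_equiv u u"
  unfolding two_move_equiv_def by simp

lemma two_move_equiv_trans [trans]:
  "two_move_equiv u v \<Longrightarrow> two_move_equiv v w \<Longrightarrow> two_move_equiv u w"
  unfolding two_move_equiv_def by (rule rtranclp_trans)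

lemma two_move_equiv_append_context:
  assumes "two_move_equiv u v"
  shows "two_move_equiv (x @ u @ y) (x @ v @ y)"
  using assms unfolding two_move_equiv_def
  by (induction rule: rtranclp_induct)
    (auto intro: rtranclp.rtrancl_into_rtrancl two_move_append_context)

lemma two_move_equiv_append:
  assumes "two_move_equiv u u'" and "two_move_equiv v v'"
  shows "two_move_equiv (u @ v) (u' @ v')"
proof -
  have "two_move_equiv ([] @ u @ v) ([] @ u' @ v)"
    using assms(1) by (rule two_move_equiv_append_context)
  moreover have "two_move_equiv (u' @ v @ []) (u' @ v' @ [])"
    using assms(2) by (rule two_move_equiv_append_context)
  ultimately show ?thesis
    using two_move_equiv_trans by simp
qed

lemma two_move_equiv_Cons_rotate:
  assumes "\<forall>b\<in>set v. a > b + 1 \<or> b > a + 1"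
  shows "two_move_equiv (a # v) (v @ [a])"
  using assms
proof (induction v)
  case Nil
  show ?case by (simp add: two_move_equiv_refl)
next
  case (Cons b v)
  have "two_move ([] @ [a, b] @ v) ([] @ [b, a] @ v)"
    using Cons.prems by (intro two_move_swap) simp
  then have "two_move_equiv (a # b # v) ([b] @ a # v)"
    unfolding two_move_equiv_def by simp
  also have "two_move_equiv \<dots> ([b] @ v @ [a])"
    using Cons by (intro two_move_equiv_append[OF two_move_equiv_refl]) simp
  finally show ?case
    by simp
qed

lemma two_move_equiv_swap:
  assumes "\<forall>a\<in>set u. \<forall>b\<in>set v. a > b + 1 \<or> b > a + 1"
  shows "two_move_equiv (u @ v) (v @ u)"
  using assms
proof (induction u)
  case Nil
  show ?case by (simp add: two_move_equiv_refl)
next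
  case (Cons a u)
  have "two_move_equiv ([a] @ u @ v) ([a] @ v @ u)"
    using Cons by (intro two_move_equiv_append[OF two_move_equiv_refl]) simp
  also have "two_move_equiv \<dots> ((v @ [a]) @ u)"
    using two_move_equiv_append[OF two_move_equiv_Cons_rotate two_move_equiv_refl] Cons.prems
    by simp
  finally show ?case
    by simp
qed

lemma iw_aux_append:
  "length ds = length ss \<Longrightarrow>
    iw_aux j (ds @ ds') (ss @ ss') w = iw_aux (j + length ds) ds' ss' (iw_aux j ds ss w)"
proof (induction ds arbitrary: ss j w)
  case Nil
  then show ?case by simp
next
  case (Cons d ds)
  then obtain s ss0 where "ss = s # ss0"
    by (cases ss) auto
  with Cons show ?case
    by simp
qed

lemma i_word_append_two:
  assumes "length ds = length ss"
  shows "i_word (ds @ [d, d']) (ss @ [s, s']) =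
    ext d' (Suc (length ds)) s' (ext d (length ds) s (i_word ds ss))"
  using assms by (simp add: i_word_def iw_aux_append)

lemma ext_A_0: "ext_A m 0 w = map Suc w @ [1..<m + 2]"
  by (simp add: ext_A_def)

lemma ext_D_0: "ext_D m 0 w = w @ rev [1..<m + 2]"
  by (simp add: ext_D_def)

lemma ext_D_after_upt:
  "ext_D (p + k) k (w @ [1..<p + k + 1]) =
    w @ [1..<p + 1] @ rev [1..<p + k + 2] @ [p + 2..<p + k + 2]"
proof -
  have "w @ [1..<p + k + 1] = (w @ [1..<p + 1]) @ [p + 1..<p + k + 1]"
    by (subst upt_append_split[of 1 "p + 1"]) simp_all
  then show ?thesis
    by (simp add: ext_D_def map_Suc_upt del: upt_Suc)
qed

lemma ext_A_after_rev_upt: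
  "ext_A (p + k) p (w @ rev [1..<p + k + 1]) =
    map Suc w @ rev [p + 2..<p + k + 2] @ [1..<p + k + 2] @ rev [1..<p + 1]"
proof -
  have "w @ rev [1..<p + k + 1] = (w @ rev [p + 1..<p + k + 1]) @ rev [1..<p + 1]"
    by (subst upt_append_split[of 1 "p + 1"]) simp_all
  then show ?thesis
    by (simp add: ext_A_def map_Suc_upt rev_map[symmetric] del: upt_Suc)
qed

lemma i_word_AD_zeros:
  assumes "length ds = m" and "Suc m = p + k"
  shows "i_word (ds @ [ExtA, ExtD]) (replicate (Suc m) 0 @ [k]) =
    map Suc (i_word ds (replicate m 0)) @ [1..<p + 1] @ rev [1..<p + k + 2] @ [p + 2..<p + k + 2]"
proof -
  have "i_word (ds @ [ExtA, ExtD]) (replicate (Suc m) 0 @ [k]) =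
      ext_D (Suc m) k (ext_A m 0 (i_word ds (replicate m 0)))"
    unfolding replicate_Suc_snoc using assms(1) by (simp add: i_word_append_two ext_def)
  also have "\<dots> = ext_D (p + k) k (map Suc (i_word ds (replicate m 0)) @ [1..<p + k + 1])"
    using assms(2) by (simp add: ext_A_0 del: upt_Suc)
  finally show ?thesis
    by (simp only: ext_D_after_upt)
qed

lemma i_word_DA_zeros:
  assumes "length ds = m" and "Suc m = p + k"
  shows "i_word (ds @ [ExtD, ExtA]) (replicate (Suc m) 0 @ [p]) =
    map Suc (i_word ds (replicate m 0)) @ rev [p + 2..<p + k + 2] @ [1..<p + k + 2] @ rev [1..<p + 1]"
proof -
  have "i_word (ds @ [ExtD, ExtA]) (replicate (Suc m) 0 @ [p]) =
      ext_A (Suc m) p (ext_D m 0 (i_word ds (replicate m 0)))"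
    unfolding replicate_Suc_snoc using assms(1) by (simp add: i_word_append_two ext_def)
  also have "\<dots> = ext_A (p + k) p (i_word ds (replicate m 0) @ rev [1..<p + k + 1])"
    using assms(2) by (simp add: ext_D_0 del: upt_Suc)
  finally show ?thesis
    by (simp only: ext_A_after_rev_upt)
qed

theorem lemma5p5:
  fixes n k :: nat and ds :: "ext_type list"
  assumes "n \<ge> 2" and "1 \<le> k" and "k \<le> n - 1" and "length ds = n - 2"
  shows "two_move_equiv
           (i_word (ds @ [ExtA, ExtD]) (replicate (n - 1) 0 @ [k]))
           (i_word (ds @ [ExtD, ExtA]) (replicate (n - 1) 0 @ [n - k - 1]))"
proof -
  define p where "p = n - k - 1"
  define W where "W = map Suc (i_word ds (replicate (length ds) 0))"
  define X where "X = [1..<p + 1]"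
  define Y where "Y = [p + 2..<n + 1]"
  have n: "n = p + k + 1" and m: "Suc (length ds) = p + k" and n_pred: "n - 1 = Suc (length ds)"
    using assms(1,3,4) by (simp_all add: p_def)
  have split: "[1..<n + 1] = X @ [p + 1] @ Y"
    using upt_split_at_elem[of 1 "p + 1" "p + k + 2"] by (simp add: X_def Y_def n)
  have left: "i_word (ds @ [ExtA, ExtD]) (replicate (n - 1) 0 @ [k]) =
      W @ (X @ rev Y) @ [p + 1] @ (rev X @ Y)"
    using split unfolding n_pred i_word_AD_zeros[OF refl m] by (simp add: W_def X_def Y_def n)
  have right: "i_word (ds @ [ExtD, ExtA]) (replicate (n - 1) 0 @ [n - k - 1]) =
      W @ (rev Y @ X) @ [p + 1] @ (Y @ rev X)"
    using split unfolding n_pred p_def[symmetric] i_word_DA_zeros[OF refl m]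
    by (simp add: W_def X_def Y_def n)
  have swap_XY: "two_move_equiv (X @ rev Y) (rev Y @ X)"
    by (rule two_move_equiv_swap) (auto simp: X_def Y_def)
  have swap_YX: "two_move_equiv (rev X @ Y) (Y @ rev X)"
    by (rule two_move_equiv_swap) (auto simp: X_def Y_def)
  show ?thesis
    unfolding left right
    by (intro two_move_equiv_append[OF two_move_equiv_refl] two_move_equiv_append[OF swap_XY]
        two_move_equiv_append[OF two_move_equiv_refl swap_YX])
qed

end
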